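(* Suppose a group $G$ admits a $\mathscr{Z}$-structure $(\overline{X},Z)$. Then $\overline{X}$ is a controlled $\mathscr{Z}$-compactification of $X=\overline{X}- Z$.
   Context: A closed subset $A$ of an ANR $Y$ is a $\mathscr{Z}$-set if there is a homotopy $H:Y\times[0,1]\to Y$ with $H_0=\mathrm{id}_Y$ and $H_t(Y)\subset Y- A$ for every $t>0$. A $\mathscr{Z}$-structure on a group $G$ is a pair of spaces $(\overline{X},Z)$ such that: (1) $\overline{X}$ is a compact AR; (2) $Z$ is a $\mathscr{Z}$-set in $\overline{X}$; (3) $X=\overline{X}- Z$ is a proper metric space (metric $d$) on which $G$ acts properly, cocompactly, by isometries; (4) (nullity condition) for every compact $C\subseteq X$ and every open cover $\mathscr{U}$ of $\overline{X}$, all but finitely many $G$-translates of $C$ lie in some element of $\mathscr{U}$. A controlled $\mathscr{Z}$-compactification of a proper metric space $(X,d)$ is a compactification $\overline{X}=X\cup Z$ (with some metric $\overline{d}$ inducing the topology of $\overline{X}$) such that (i) $Z$ is a $\mathscr{Z}$-set in $\overline{X}$, and (ii) for every $\epsilon>0$ and $R>0$ there is a compact $K\subset X$ such that every ball of radius $R$ in $(X,d)$ not intersecting $K$ has $\overline{d}$-diameter less than $\epsilon$. *)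

theory Defs
  imports "HOL-Analysis.Analysis" "HOL-Algebra.Group_Action"
begin

text \<open>Test spaces are the
metrizable topologies on the type nat => real (which has the cardinality of the
continuum, so every separable metrizable space occurs up to homeomorphism).\<close>

definition ANR :: "'a topology \<Rightarrow> bool" where
  "ANR X \<longleftrightarrow> metrizable_space X \<and>
     (\<forall>(Y :: (nat \<Rightarrow> real) topology) f.
        metrizable_space Y \<and> embedding_map X Y f \<and> closedin Y (f ` topspace X) \<longrightarrow>
        (\<exists>U. openin Y U \<and> (f ` topspace X) retract_of_space (subtopology Y U)))"

definition AR :: "'a topology \<Rightarrow> bool" where
  "AR X \<longleftrightarrow> metrizable_space X \<and>
     (\<forall>(Y :: (nat \<Rightarrow> real) topology) f.
        metrizable_space Y \<and> embedding_map X Y f \<and> closedin Y (f ` topspace X) \<longrightarrow>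
        (f ` topspace X) retract_of_space Y)"

definition Zset :: "'a topology \<Rightarrow> 'a set \<Rightarrow> bool" where
  "Zset Y A \<longleftrightarrow> ANR Y \<and> closedin Y A \<and>
     (\<exists>H. continuous_map (prod_topology Y (top_of_set {0..1::real})) Y H \<and>
          (\<forall>x\<in>topspace Y. H (x, 0) = x) \<and>
          (\<forall>t\<in>{0<..1::real}. \<forall>x\<in>topspace Y. H (x, t) \<in> topspace Y - A))"

definition proper_metric_space :: "'a set \<Rightarrow> ('a \<Rightarrow> 'a \<Rightarrow> real) \<Rightarrow> bool" where
  "proper_metric_space M d \<longleftrightarrow> Metric_space M d \<and>
     (\<forall>x\<in>M. \<forall>r. compactin (Metric_space.mtopology M d) (Metric_space.mcball M d x r))"

definition Z_structure ::
  "('g, 'b) monoid_scheme \<Rightarrow> ('g \<Rightarrow> 'a \<Rightarrow> 'a) \<Rightarrow> 'a topology \<Rightarrow> 'a set \<Rightarrow> ('a \<Rightarrow> 'a \<Rightarrow> real) \<Rightarrow> bool"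
where
  "Z_structure G \<phi> Xbar Z d \<longleftrightarrow>
     (let X = topspace Xbar - Z in
       compact_space Xbar \<and> AR Xbar \<and>
       Z \<subseteq> topspace Xbar \<and> Zset Xbar Z \<and>
       proper_metric_space X d \<and>
       Metric_space.mtopology X d = subtopology Xbar X \<and>
       group G \<and> group_action G X \<phi> \<and>
       (\<forall>g\<in>carrier G. \<forall>x\<in>X. \<forall>y\<in>X. d (\<phi> g x) (\<phi> g y) = d x y) \<and>
       (\<forall>K. compactin (subtopology Xbar X) K \<longrightarrow>
            finite {g \<in> carrier G. \<phi> g ` K \<inter> K \<noteq> {}}) \<and>
       (\<exists>K. compactin (subtopology Xbar X) K \<and> (\<Union>g\<in>carrier G. \<phi> g ` K) = X) \<and>
       (\<forall>C \<U>. compactin (subtopology Xbar X) C \<and> (\<forall>U\<in>\<U>. openin Xbar U) \<and>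
              \<Union>\<U> = topspace Xbar \<longrightarrow>
              finite {g \<in> carrier G. \<not> (\<exists>U\<in>\<U>. \<phi> g ` C \<subseteq> U)}))"

definition controlled_Z_compactification ::
  "'a topology \<Rightarrow> 'a set \<Rightarrow> ('a \<Rightarrow> 'a \<Rightarrow> real) \<Rightarrow> bool"
where
  "controlled_Z_compactification Xbar Z d \<longleftrightarrow>
     (let X = topspace Xbar - Z in
       proper_metric_space X d \<and>
       compact_space Xbar \<and> Z \<subseteq> topspace Xbar \<and>
       Metric_space.mtopology X d = subtopology Xbar X \<and>
       Xbar closure_of X = topspace Xbar \<and>
       Zset Xbar Z \<and>
       (\<exists>dbar. Metric_space (topspace Xbar) dbar \<and>
              Metric_space.mtopology (topspace Xbar) dbar = Xbar \<and>
              (\<forall>\<epsilon>>0. \<forall>R>0. \<exists>K. compactin (subtopology Xbar X) K \<and>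
                 (\<forall>x\<in>X. Metric_space.mball X d x R \<inter> K = {} \<longrightarrow>
                    (\<exists>\<delta><\<epsilon>. \<forall>y\<in>Metric_space.mball X d x R.
                        \<forall>z\<in>Metric_space.mball X d x R. dbar y z \<le> \<delta>)))))"

end

theory Submission
  imports Defs
begin

text \<open>Fix \<open>\<epsilon>, R > 0\<close>. Since \<open>X\<close> is proper and the action is cocompact and isometric,
every \<open>R\<close>-ball of \<open>X\<close> lies in a translate \<open>g C\<close> of a single compact set \<open>C\<close>. Applying the
nullity condition to \<open>C\<close> and the cover of \<open>Xbar\<close> by \<open>\<epsilon>/3\<close>-balls of a metric on \<open>Xbar\<close>,
all but finitely many translates \<open>g C\<close> are \<open>\<epsilon>/3\<close>-small; the union \<open>K\<close> of the exceptional
ones is compact, and an \<open>R\<close>-ball missing \<open>K\<close> lies in a small translate. Density of \<open>X\<close>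
in \<open>Xbar\<close> holds because the Z-set homotopy pushes every point off \<open>Z\<close> instantly.\<close>

lemma Zset_complement_dense:
  assumes "Zset Y A"
  shows "Y closure_of (topspace Y - A) = topspace Y"
proof -
  obtain H where H: "continuous_map (prod_topology Y (top_of_set {0..1::real})) Y H"
    and H0: "\<And>x. x \<in> topspace Y \<Longrightarrow> H (x, 0) = x"
    and H_off: "\<And>t x. t \<in> {0<..1} \<Longrightarrow> x \<in> topspace Y \<Longrightarrow> H (x, t) \<in> topspace Y - A"
    using assms unfolding Zset_def by blast
  have "z \<in> Y closure_of (topspace Y - A)" if z: "z \<in> topspace Y" for z
    unfolding in_closure_of
  proof (intro conjI z allI impI)
    fix T assume T: "z \<in> T \<and> openin Y T"
    have "continuous_map (top_of_set {0..1}) Y (\<lambda>t. H (z, t))"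
      using continuous_map_compose[OF _ H, of _ "\<lambda>t. (z, t)"] z
      by (simp add: o_def continuous_map_paired)
    then have "openin (top_of_set {0..1}) {t \<in> {0..1::real}. H (z, t) \<in> T}"
      using T openin_continuous_map_preimage by fastforce
    moreover have "0 \<in> {t \<in> {0..1::real}. H (z, t) \<in> T}"
      using z T H0 by auto
    ultimately obtain e where "e > 0" and e: "\<And>t. t \<in> {0..1} \<Longrightarrow> dist t 0 < e \<Longrightarrow> H (z, t) \<in> T"
      unfolding openin_euclidean_subtopology_iff by blast
    define t where "t = min 1 (e / 2)"
    have "t \<in> {0<..1}" "dist t 0 < e"
      using \<open>e > 0\<close> by (auto simp: t_def dist_real_def)
    then show "\<exists>y. y \<in> topspace Y - A \<and> y \<in> T"
      using e H_off z by force
  qed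
  then show ?thesis
    by (intro subset_antisym closure_of_subset_topspace subsetI)
qed

lemma metrizable_space_obtains_metric:
  assumes "metrizable_space X"
  obtains d where "Metric_space (topspace X) d" "Metric_space.mtopology (topspace X) d = X"
proof -
  obtain M d where "Metric_space M d" "X = Metric_space.mtopology M d"
    using assms unfolding metrizable_space_def by blast
  then show thesis
    using that Metric_space.topspace_mtopology by metis
qed

context Metric_space
begin

lemma continuous_map_isometry:
  assumes "f ` M \<subseteq> M" and "\<And>x y. x \<in> M \<Longrightarrow> y \<in> M \<Longrightarrow> d (f x) (f y) = d x y"
  shows "continuous_map mtopology mtopology f"
  unfolding metric_continuous_map[OF Metric_space_axioms]
  using assms by (metis image_subset_iff)

lemma mball_isometry_image:
  assumes "f ` M = M" and "\<And>x y. x \<in> M \<Longrightarrow> y \<in> M \<Longrightarrow> d (f x) (f y) = d x y" and "k \<in> M"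
  shows "mball (f k) r = f ` mball k r"
proof
  have fM: "\<And>x. x \<in> M \<Longrightarrow> f x \<in> M"
    using assms(1) by blast
  then show "f ` mball k r \<subseteq> mball (f k) r"
    using assms(2,3) by auto
  show "mball (f k) r \<subseteq> f ` mball k r"
  proof
    fix y assume y: "y \<in> mball (f k) r"
    then obtain x where "x \<in> M" "y = f x"
      using assms(1) by (metis imageE in_mball)
    then show "y \<in> f ` mball k r"
      using y assms(2,3) by auto
  qed
qed

lemma translates_of_compact_contain_balls:
  assumes proper: "\<And>x r. x \<in> M \<Longrightarrow> compactin mtopology (mcball x r)"
    and surj: "\<And>i. i \<in> I \<Longrightarrow> \<phi> i ` M = M"
    and iso: "\<And>i x y. i \<in> I \<Longrightarrow> x \<in> M \<Longrightarrow> y \<in> M \<Longrightarrow> d (\<phi> i x) (\<phi> i y) = d x y"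
    and K: "compactin mtopology K" "(\<Union>i\<in>I. \<phi> i ` K) = M"
  obtains C where "compactin mtopology C" "\<And>x. x \<in> M \<Longrightarrow> \<exists>i\<in>I. mball x R \<subseteq> \<phi> i ` C"
proof (cases "K = {}")
  case True
  then show thesis
    using that K(2) by fastforce
next
  case False
  then obtain k0 where "k0 \<in> K" by blast
  have "K \<subseteq> M"
    using K(1) compactin_subset_topspace by fastforce
  obtain B where B: "\<And>x y. x \<in> K \<Longrightarrow> y \<in> K \<Longrightarrow> d x y \<le> B"
    using K(1) compactin_imp_mbounded mbounded_alt by meson
  define C where "C = mcball k0 (B + R)"
  have ball_C: "mball k R \<subseteq> C" if "k \<in> K" for k
  proof
    fix y assume "y \<in> mball k R"
    moreover have "d k0 y \<le> d k0 k + d k y"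
      using \<open>k0 \<in> K\<close> \<open>K \<subseteq> M\<close> that \<open>y \<in> mball k R\<close> by (auto intro: triangle)
    ultimately show "y \<in> C"
      using B[OF \<open>k0 \<in> K\<close> that] \<open>k0 \<in> K\<close> \<open>K \<subseteq> M\<close> by (auto simp: C_def)
  qed
  have "compactin mtopology C"
    using proper \<open>k0 \<in> K\<close> \<open>K \<subseteq> M\<close> unfolding C_def by blast
  moreover have "\<exists>i\<in>I. mball x R \<subseteq> \<phi> i ` C" if "x \<in> M" for x
  proof -
    obtain i k where "i \<in> I" "k \<in> K" "x = \<phi> i k"
      using K(2) \<open>x \<in> M\<close> by blast
    moreover have "k \<in> M"
      using \<open>K \<subseteq> M\<close> \<open>k \<in> K\<close> by blast
    ultimately have "mball x R = \<phi> i ` mball k R"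
      by (simp add: mball_isometry_image surj iso)
    then show ?thesis
      using \<open>i \<in> I\<close> ball_C[OF \<open>k \<in> K\<close>] by blast
  qed
  ultimately show thesis
    by (rule that)
qed

lemma finite_not_subset_mball:
  assumes null: "\<And>\<U>. \<forall>U\<in>\<U>. openin mtopology U \<Longrightarrow> \<Union>\<U> = M \<Longrightarrow>
                       finite {i \<in> I. \<not> (\<exists>U\<in>\<U>. S i \<subseteq> U)}"
    and "r > 0"
  shows "finite {i \<in> I. \<not> (\<exists>p\<in>M. S i \<subseteq> mball p r)}"
proof -
  let ?\<U> = "(\<lambda>p. mball p r) ` M"
  have "\<Union>?\<U> = M"
    using \<open>r > 0\<close> by auto
  then have "finite {i \<in> I. \<not> (\<exists>U\<in>?\<U>. S i \<subseteq> U)}"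
    by (intro null) auto
  then show ?thesis
    by (rule rev_finite_subset) blast
qed

end

lemma controlled_balls_of_cocompact_null_isometries:
  assumes proper: "proper_metric_space X d"
    and X_top: "Metric_space.mtopology X d = subtopology Xbar X"
    and dbar: "Metric_space (topspace Xbar) dbar" "Metric_space.mtopology (topspace Xbar) dbar = Xbar"
    and surj: "\<And>i. i \<in> I \<Longrightarrow> \<phi> i ` X = X"
    and iso: "\<And>i x y. i \<in> I \<Longrightarrow> x \<in> X \<Longrightarrow> y \<in> X \<Longrightarrow> d (\<phi> i x) (\<phi> i y) = d x y"
    and cocompact: "compactin (subtopology Xbar X) K0" "(\<Union>i\<in>I. \<phi> i ` K0) = X"
    and null: "\<And>C \<U>. compactin (subtopology Xbar X) C \<Longrightarrow> \<forall>U\<in>\<U>. openin Xbar U \<Longrightarrow>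
                       \<Union>\<U> = topspace Xbar \<Longrightarrow> finite {i \<in> I. \<not> (\<exists>U\<in>\<U>. \<phi> i ` C \<subseteq> U)}"
    and "\<epsilon> > 0" "R > 0"
  shows "\<exists>K. compactin (subtopology Xbar X) K \<and>
           (\<forall>x\<in>X. Metric_space.mball X d x R \<inter> K = {} \<longrightarrow>
              (\<exists>\<delta><\<epsilon>. \<forall>y\<in>Metric_space.mball X d x R. \<forall>z\<in>Metric_space.mball X d x R. dbar y z \<le> \<delta>))"
proof -
  interpret M: Metric_space X d
    using proper by (simp add: proper_metric_space_def)
  interpret D: Metric_space "topspace Xbar" dbar
    by (rule dbar(1))
  have proper_balls: "\<And>x r. x \<in> X \<Longrightarrow> compactin M.mtopology (M.mcball x r)"
    using proper by (simp add: proper_metric_space_def)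
  have "compactin M.mtopology K0"
    using cocompact(1) X_top by simp
  then obtain C where C: "compactin M.mtopology C"
    and C_balls: "\<And>x. x \<in> X \<Longrightarrow> \<exists>i\<in>I. M.mball x R \<subseteq> \<phi> i ` C"
    using M.translates_of_compact_contain_balls[OF proper_balls surj iso _ cocompact(2)] by blast
  define F where "F = {i \<in> I. \<not> (\<exists>p\<in>topspace Xbar. \<phi> i ` C \<subseteq> D.mball p (\<epsilon> / 3))}"
  have "finite F"
    unfolding F_def using null C X_top dbar(2) \<open>\<epsilon> > 0\<close>
    by (intro D.finite_not_subset_mball) auto
  define K where "K = (\<Union>i\<in>F. \<phi> i ` C)"
  have "compactin M.mtopology K"
    unfolding K_def
  proof (rule compactin_Union)
    fix S assume "S \<in> (\<lambda>i. \<phi> i ` C) ` F"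
    then obtain i where "i \<in> I" "S = \<phi> i ` C"
      unfolding F_def by blast
    then show "compactin M.mtopology S"
      by (simp add: image_compactin[OF C] M.continuous_map_isometry surj iso)
  qed (use \<open>finite F\<close> in simp)
  moreover have "\<exists>\<delta><\<epsilon>. \<forall>y\<in>M.mball x R. \<forall>z\<in>M.mball x R. dbar y z \<le> \<delta>"
    if "x \<in> X" and disjoint: "M.mball x R \<inter> K = {}" for x
  proof -
    obtain i where "i \<in> I" and ball: "M.mball x R \<subseteq> \<phi> i ` C"
      using C_balls \<open>x \<in> X\<close> by blast
    have "i \<notin> F"
      using ball disjoint \<open>x \<in> X\<close> \<open>R > 0\<close> unfolding K_def by fastforce
    then obtain p where "p \<in> topspace Xbar" and small: "\<phi> i ` C \<subseteq> D.mball p (\<epsilon> / 3)"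
      using \<open>i \<in> I\<close> unfolding F_def by blast
    show ?thesis
    proof (intro exI[of _ "2 * \<epsilon> / 3"] conjI ballI)
      show "2 * \<epsilon> / 3 < \<epsilon>"
        using \<open>\<epsilon> > 0\<close> by simp
      fix y z assume "y \<in> M.mball x R" "z \<in> M.mball x R"
      then have "y \<in> D.mball p (\<epsilon> / 3)" "z \<in> D.mball p (\<epsilon> / 3)"
        using ball small by blast+
      then show "dbar y z \<le> 2 * \<epsilon> / 3"
        using D.triangle''[of y p z] by auto
    qed
  qed
  ultimately show ?thesis
    using X_top by auto
qed

theorem lemma12:
  fixes G :: "('g, 'b) monoid_scheme" and \<phi> :: "'g \<Rightarrow> 'a \<Rightarrow> 'a"
    and Xbar :: "'a topology" and Z :: "'a set" and d :: "'a \<Rightarrow> 'a \<Rightarrow> real"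
  assumes "Z_structure G \<phi> Xbar Z d"
  shows "controlled_Z_compactification Xbar Z d"
proof -
  define X where "X = topspace Xbar - Z"
  have Xbar: "compact_space Xbar" "AR Xbar" "Z \<subseteq> topspace Xbar" "Zset Xbar Z"
    and X: "proper_metric_space X d" "Metric_space.mtopology X d = subtopology Xbar X"
    and action: "group_action G X \<phi>"
    and iso: "\<And>g x y. g \<in> carrier G \<Longrightarrow> x \<in> X \<Longrightarrow> y \<in> X \<Longrightarrow> d (\<phi> g x) (\<phi> g y) = d x y"
    and cocompact: "\<exists>K. compactin (subtopology Xbar X) K \<and> (\<Union>g\<in>carrier G. \<phi> g ` K) = X"
    and null: "\<And>C \<U>. compactin (subtopology Xbar X) C \<Longrightarrow> \<forall>U\<in>\<U>. openin Xbar U \<Longrightarrow>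
                  \<Union>\<U> = topspace Xbar \<Longrightarrow> finite {g \<in> carrier G. \<not> (\<exists>U\<in>\<U>. \<phi> g ` C \<subseteq> U)}"
    using assms unfolding Z_structure_def Let_def X_def[symmetric] by simp_all
  obtain K0 where K0: "compactin (subtopology Xbar X) K0" "(\<Union>g\<in>carrier G. \<phi> g ` K0) = X"
    using cocompact by blast
  obtain dbar where dbar: "Metric_space (topspace Xbar) dbar" "Metric_space.mtopology (topspace Xbar) dbar = Xbar"
    using Xbar(2) metrizable_space_obtains_metric unfolding AR_def by blast
  note control = controlled_balls_of_cocompact_null_isometries
    [OF X dbar group_action.surj_prop[OF action] iso K0 null]
  show ?thesis
    unfolding controlled_Z_compactification_def Let_def X_def[symmetric]
    using Xbar X dbar control Zset_complement_dense[OF Xbar(4), folded X_def] by blast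
qed

end
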